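(* Let $G$ be a connected graph in $\mathcal{C}$ and $C$ an induced $C_5$ in $G$ with vertices $0,\dots,4$ in cyclic order. For any two distinct indices $i,j$, no vertex of $X_i$ has two neighbours in $X_j$.
   Context: $\mathcal{C}=\mathrm{Free}(\text{claw}, 4K_1, \text{5-wheel}, C_5\text{-twin}, P_5\text{-twin}, K_5-e)$, where $\mathrm{Free}(L)$ is the class of graphs with no induced subgraph isomorphic to a member of $L$; the claw is $K_{1,3}$; $4K_1$ is the edgeless graph on 4 vertices; the 5-wheel is $C_5$ plus a vertex adjacent to all five cycle vertices; the $C_5$-twin is $C_5$ plus a new vertex adjacent to one cycle vertex $v$ and both cycle-neighbours of $v$; the $P_5$-twin is a path $p_1p_2p_3p_4p_5$ plus a new vertex adjacent to exactly $p_2,p_3,p_4$; $K_5-e$ is $K_5$ minus one edge. Given an induced cycle $C$ of length 5 with vertices $0,\dots,4$ in cyclic order (indices taken mod 5): $R$ is the set of vertices outside $C$ with no neighbour in $C$; $X_j$ is the set of vertices outside $C$ whose neighbourhood in $C$ is exactly $\{j,j+1\}$; $Y_j$ is the set of vertices outside $C$ whose neighbourhood in $C$ is exactly $\{j,j+1,j+2,j+3\}$; $X=\bigcup_j X_j$, $Y=\bigcup_j Y_j$. *)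

theory Defs
  imports Main
begin

definition simple_graph :: "'a set \<Rightarrow> ('a \<Rightarrow> 'a \<Rightarrow> bool) \<Rightarrow> bool" where
  "simple_graph V E \<longleftrightarrow> finite V \<and> (\<forall>x y. E x y \<longrightarrow> x \<in> V \<and> y \<in> V)
     \<and> (\<forall>x y. E x y \<longrightarrow> E y x) \<and> (\<forall>x. \<not> E x x)"

definition connected_graph :: "'a set \<Rightarrow> ('a \<Rightarrow> 'a \<Rightarrow> bool) \<Rightarrow> bool" where
  "connected_graph V E \<longleftrightarrow> (\<forall>x\<in>V. \<forall>y\<in>V. (x, y) \<in> {(a, b). E a b}\<^sup>*)"

definition pat_adj :: "(nat \<times> nat) list \<Rightarrow> nat \<Rightarrow> nat \<Rightarrow> bool" where
  "pat_adj es a b \<longleftrightarrow> (a, b) \<in> set es \<or> (b, a) \<in> set es"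

definition has_induced :: "'a set \<Rightarrow> ('a \<Rightarrow> 'a \<Rightarrow> bool) \<Rightarrow> nat \<Rightarrow> (nat \<times> nat) list \<Rightarrow> bool" where
  "has_induced V E n es \<longleftrightarrow> (\<exists>f. inj_on f {..<n} \<and> f ` {..<n} \<subseteq> V \<and>
      (\<forall>a<n. \<forall>b<n. E (f a) (f b) \<longleftrightarrow> pat_adj es a b))"

definition claw_edges :: "(nat \<times> nat) list" where
  "claw_edges = [(0,1),(0,2),(0,3)]"

definition fourK1_edges :: "(nat \<times> nat) list" where
  "fourK1_edges = []"                  (* on 4 vertices *)

definition C5_edges :: "(nat \<times> nat) list" where
  "C5_edges = [(0,1),(1,2),(2,3),(3,4),(4,0)]"

definition wheel5_edges :: "(nat \<times> nat) list" where
  "wheel5_edges = C5_edges @ [(5,0),(5,1),(5,2),(5,3),(5,4)]"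

definition C5_twin_edges :: "(nat \<times> nat) list" where
  "C5_twin_edges = C5_edges @ [(5,0),(5,1),(5,4)]"

definition P5_twin_edges :: "(nat \<times> nat) list" where
  "P5_twin_edges = [(0,1),(1,2),(2,3),(3,4),(5,1),(5,2),(5,3)]"

definition K5_minus_e_edges :: "(nat \<times> nat) list" where
  "K5_minus_e_edges = [(0,2),(0,3),(0,4),(1,2),(1,3),(1,4),(2,3),(2,4),(3,4)]"

definition in_class_C :: "'a set \<Rightarrow> ('a \<Rightarrow> 'a \<Rightarrow> bool) \<Rightarrow> bool" where
  "in_class_C V E \<longleftrightarrow> simple_graph V E \<and>
     \<not> has_induced V E 4 claw_edges \<and>
     \<not> has_induced V E 4 fourK1_edges \<and>
     \<not> has_induced V E 6 wheel5_edges \<and>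
     \<not> has_induced V E 6 C5_twin_edges \<and>
     \<not> has_induced V E 6 P5_twin_edges \<and>
     \<not> has_induced V E 5 K5_minus_e_edges"

definition induced_C5 :: "'a set \<Rightarrow> ('a \<Rightarrow> 'a \<Rightarrow> bool) \<Rightarrow> (nat \<Rightarrow> 'a) \<Rightarrow> bool" where
  "induced_C5 V E c \<longleftrightarrow> inj_on c {..<5} \<and> c ` {..<5} \<subseteq> V \<and>
     (\<forall>i<5. \<forall>j<5. E (c i) (c j) \<longleftrightarrow> (j = (i + 1) mod 5 \<or> i = (j + 1) mod 5))"

definition Xset :: "'a set \<Rightarrow> ('a \<Rightarrow> 'a \<Rightarrow> bool) \<Rightarrow> (nat \<Rightarrow> 'a) \<Rightarrow> nat \<Rightarrow> 'a set" where
  "Xset V E c j = {v \<in> V - c ` {..<5}. \<forall>k<5. E v (c k) \<longleftrightarrow> (k = j mod 5 \<or> k = (j + 1) mod 5)}"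

end

theory Submission
  imports Defs "HOL-Number_Theory.Cong"
begin

text \<open>
  Rotating the cycle we may assume i = 0. Let y, z \<in> X_j be neighbours of x \<in> X_0. Some cycle
  vertex c_k is adjacent to x but to neither y nor z, so claw-freeness at x forces y z to be
  an edge. If X_j shares a cycle vertex with X_0 (j = 1 or 4), then x, y, z, that vertex and its
  other cycle neighbour span a K_5 - e; otherwise (j = 2 or 3) y, x and three cycle vertices
  form a 5-cycle to which z is a C_5-twin.
\<close>

lemma has_induced_listI:
  assumes "length vs = n" "distinct vs" "set vs \<subseteq> V"
    and "\<forall>a<n. \<forall>b<n. E (vs ! a) (vs ! b) \<longleftrightarrow> pat_adj es a b"
  shows "has_induced V E n es"
  unfolding has_induced_def
proof (intro exI conjI)
  show "inj_on ((!) vs) {..<n}" using assms(1,2) by (simp add: inj_on_def nth_eq_iff_index_eq)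
  show "(!) vs ` {..<n} \<subseteq> V" using assms(1,3) by (auto simp: set_conv_nth)
qed (use assms(4) in blast)

lemma simple_graph_adj_sym: "simple_graph V E \<Longrightarrow> E x y \<longleftrightarrow> E y x"
  and simple_graph_irrefl: "simple_graph V E \<Longrightarrow> \<not> E x x"
  unfolding simple_graph_def by blast+

lemma claw_free_common_neighbours_adjacent:
  assumes G: "simple_graph V E" and "\<not> has_induced V E 4 claw_edges"
    and "{x, u, y, z} \<subseteq> V" "distinct [x, u, y, z]"
    and "E x u" "E x y" "E x z" "\<not> E u y" "\<not> E u z"
  shows "E y z"
proof (rule ccontr)
  assume "\<not> E y z"
  then have "has_induced V E 4 claw_edges"
    using assms simple_graph_adj_sym[OF G] simple_graph_irrefl[OF G]
    by (intro has_induced_listI[of "[x, u, y, z]"])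
       (auto simp: less_Suc_eq numeral_eq_Suc pat_adj_def claw_edges_def)
  with assms(2) show False by contradiction
qed

lemma K5_minus_e_free:
  assumes G: "simple_graph V E" and "\<not> has_induced V E 5 K5_minus_e_edges"
    and "{v0, v1, v2, v3, v4} \<subseteq> V" "distinct [v0, v1, v2, v3, v4]" "\<not> E v0 v1"
    and "E v0 v2" "E v0 v3" "E v0 v4" "E v1 v2" "E v1 v3" "E v1 v4"
    and "E v2 v3" "E v2 v4" "E v3 v4"
  shows False
proof -
  have "has_induced V E 5 K5_minus_e_edges"
    using assms simple_graph_adj_sym[OF G] simple_graph_irrefl[OF G]
    by (intro has_induced_listI[of "[v0, v1, v2, v3, v4]"])
       (auto simp: less_Suc_eq numeral_eq_Suc pat_adj_def K5_minus_e_edges_def)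
  with assms(2) show False by contradiction
qed

lemma C5_twin_free:
  assumes G: "simple_graph V E" and "\<not> has_induced V E 6 C5_twin_edges"
    and "{v0, v1, v2, v3, v4, t} \<subseteq> V" "distinct [v0, v1, v2, v3, v4, t]"
    and "E v0 v1" "E v1 v2" "E v2 v3" "E v3 v4" "E v4 v0"
    and "\<not> E v0 v2" "\<not> E v0 v3" "\<not> E v1 v3" "\<not> E v1 v4" "\<not> E v2 v4"
    and "E t v0" "E t v1" "E t v4" "\<not> E t v2" "\<not> E t v3"
  shows False
proof -
  have "has_induced V E 6 C5_twin_edges"
    using assms simple_graph_adj_sym[OF G] simple_graph_irrefl[OF G]
    by (intro has_induced_listI[of "[v0, v1, v2, v3, v4, t]"])
       (auto simp: less_Suc_eq numeral_eq_Suc pat_adj_def C5_twin_edges_def C5_edges_def)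
  with assms(2) show False by contradiction
qed

lemma induced_C5_adj:
  "induced_C5 V E c \<Longrightarrow> a < 5 \<Longrightarrow> b < 5 \<Longrightarrow> E (c a) (c b) \<longleftrightarrow> b = (a + 1) mod 5 \<or> a = (b + 1) mod 5"
  unfolding induced_C5_def by blast

lemma induced_C5_eq_iff:
  "induced_C5 V E c \<Longrightarrow> a < 5 \<Longrightarrow> b < 5 \<Longrightarrow> c a = c b \<longleftrightarrow> a = b"
  unfolding induced_C5_def inj_on_def by blast

lemma induced_C5_in_V: "induced_C5 V E c \<Longrightarrow> a < 5 \<Longrightarrow> c a \<in> V"
  unfolding induced_C5_def by blast

lemma XsetD:
  assumes "v \<in> Xset V E c j"
  shows "v \<in> V" "\<And>k. k < 5 \<Longrightarrow> v \<noteq> c k"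
    and "\<And>k. k < 5 \<Longrightarrow> E v (c k) \<longleftrightarrow> k = j mod 5 \<or> k = (j + 1) mod 5"
  using assms unfolding Xset_def by auto

lemma XsetD_adj_sym:
  "simple_graph V E \<Longrightarrow> v \<in> Xset V E c j \<Longrightarrow> k < 5 \<Longrightarrow> E (c k) v \<longleftrightarrow> k = j mod 5 \<or> k = (j + 1) mod 5"
  using XsetD(3) simple_graph_adj_sym by metis

lemma rotate5_eq_iff: "k < 5 \<Longrightarrow> (k + r) mod 5 = (j + r) mod 5 \<longleftrightarrow> k = j mod (5::nat)"
  using cong_add_rcancel_nat[of k r j 5] unfolding cong_def by simp

lemma rotate5_image: "(\<lambda>n. (n + r) mod 5) ` {..<5} = {..<5::nat}"
  by (rule endo_inj_surj) (auto simp: inj_on_def rotate5_eq_iff)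

lemma rotate5_eq_Suc_iff: "k < 5 \<Longrightarrow> (k + r) mod 5 = Suc ((j + r) mod 5) mod 5 \<longleftrightarrow> k = Suc j mod (5::nat)"
  using rotate5_eq_iff[of k r "Suc j"] by (simp add: mod_Suc_eq)

lemma induced_C5_rotate:
  assumes "induced_C5 V E c"
  shows "induced_C5 V E (\<lambda>n. c ((n + r) mod 5))"
  unfolding induced_C5_def
proof (intro conjI allI impI)
  show "inj_on (\<lambda>n. c ((n + r) mod 5)) {..<5}"
  proof (rule inj_onI)
    fix a b :: nat assume "a \<in> {..<5}" "b \<in> {..<5}" "c ((a + r) mod 5) = c ((b + r) mod 5)"
    then show "a = b"
      using induced_C5_eq_iff[OF assms] rotate5_eq_iff[of a r b] by simp
  qed
  show "(\<lambda>n. c ((n + r) mod 5)) ` {..<5} \<subseteq> V"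
    using assms rotate5_image unfolding induced_C5_def by (auto simp: image_image)
  fix a b :: nat assume "a < 5" "b < 5"
  then show "E (c ((a + r) mod 5)) (c ((b + r) mod 5)) \<longleftrightarrow> b = (a + 1) mod 5 \<or> a = (b + 1) mod 5"
    by (simp add: induced_C5_adj[OF assms] rotate5_eq_Suc_iff rotate5_eq_iff)
qed

lemma Xset_rotate: "Xset V E (\<lambda>n. c ((n + r) mod 5)) j = Xset V E c ((j + r) mod 5)"
proof -
  have img: "(\<lambda>n. c ((n + r) mod 5)) ` {..<5} = c ` {..<5}"
    using rotate5_image[of r] by (metis image_image)
  have reindex: "(\<forall>m<5. P m) \<longleftrightarrow> (\<forall>k<5. P ((k + r) mod 5))" for P
    using rotate5_image[of r] by (metis (no_types, lifting) image_iff lessThan_iff)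
  have "(\<forall>k<5. E v (c ((k + r) mod 5)) \<longleftrightarrow> k = j mod 5 \<or> k = (j + 1) mod 5)
      \<longleftrightarrow> (\<forall>m<5. E v (c m) \<longleftrightarrow> m = (j + r) mod 5 mod 5 \<or> m = ((j + r) mod 5 + 1) mod 5)" for v
    unfolding reindex[of "\<lambda>m. E v (c m) \<longleftrightarrow> m = (j + r) mod 5 mod 5 \<or> m = ((j + r) mod 5 + 1) mod 5"]
    by (simp add: rotate5_eq_iff rotate5_eq_Suc_iff)
  then show ?thesis
    unfolding Xset_def img by (simp only:)
qed

lemma no_two_neighbours_in_Xj_of_X0_vertex:
  assumes C: "in_class_C V E" and c: "induced_C5 V E c" and "0 < j" "j < 5"
    and x: "x \<in> Xset V E c 0" and y: "y \<in> Xset V E c j" and z: "z \<in> Xset V E c j"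
    and "y \<noteq> z" "E x y" "E x z"
  shows False
proof -
  have G: "simple_graph V E" and claw: "\<not> has_induced V E 4 claw_edges"
    and K5e: "\<not> has_induced V E 5 K5_minus_e_edges" and twin: "\<not> has_induced V E 6 C5_twin_edges"
    using C unfolding in_class_C_def by auto
  note C5_facts = induced_C5_adj[OF c] induced_C5_eq_iff[OF c] induced_C5_in_V[OF c]
    XsetD[OF x] XsetD[OF y] XsetD[OF z]
    XsetD(2)[OF x, THEN not_sym] XsetD(2)[OF y, THEN not_sym] XsetD(2)[OF z, THEN not_sym]
    XsetD_adj_sym[OF G x] XsetD_adj_sym[OF G y] XsetD_adj_sym[OF G z]
  have "x \<noteq> y" "x \<noteq> z"
    using \<open>E x y\<close> \<open>E x z\<close> simple_graph_irrefl[OF G] by auto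
  have "E y z"
  proof -
    obtain k where k: "k < 5" "E x (c k)" "\<not> E y (c k)" "\<not> E z (c k)"
    proof (cases "j = 4")
      case True
      then show ?thesis by (intro that[of 1]) (simp_all add: C5_facts)
    next
      case False
      then show ?thesis using assms(3,4) by (intro that[of 0]) (simp_all add: C5_facts)
    qed
    have vertices: "{x, c k, y, z} \<subseteq> V" "distinct [x, c k, y, z]"
      using k(1) \<open>y \<noteq> z\<close> \<open>x \<noteq> y\<close> \<open>x \<noteq> z\<close> by (simp_all add: C5_facts)
    have "\<not> E (c k) y" "\<not> E (c k) z"
      using k(3,4) simple_graph_adj_sym[OF G, of "c k"] by simp_all
    then show ?thesis
      by (intro claw_free_common_neighbours_adjacent[OF G claw vertices k(2) \<open>E x y\<close> \<open>E x z\<close>])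
  qed
  then have xyz_adj: "E x y" "E y x" "E x z" "E z x" "E y z" "E z y"
    using \<open>E x y\<close> \<open>E x z\<close> simple_graph_adj_sym[OF G] by blast+
  consider "j = 1" | "j = 2" | "j = 3" | "j = 4" using assms(3,4) by linarith
  then show False
  proof cases
    case 1
    show False
      by (rule K5_minus_e_free[OF G K5e, of "c 2" x "c 1" y z])
         (use assms xyz_adj \<open>x \<noteq> y\<close> \<open>x \<noteq> z\<close> 1 in \<open>simp_all add: C5_facts\<close>)
  next
    case 2
    show False
      by (rule C5_twin_free[OF G twin, of y "c 3" "c 4" "c 0" x z])
         (use assms xyz_adj \<open>x \<noteq> y\<close> \<open>x \<noteq> z\<close> 2 in \<open>simp_all add: C5_facts\<close>)
  next
    case 3
    show False
      by (rule C5_twin_free[OF G twin, of y "c 3" "c 2" "c 1" x z])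
         (use assms xyz_adj \<open>x \<noteq> y\<close> \<open>x \<noteq> z\<close> 3 in \<open>simp_all add: C5_facts\<close>)
  next
    case 4
    show False
      by (rule K5_minus_e_free[OF G K5e, of "c 4" x "c 0" y z])
         (use assms xyz_adj \<open>x \<noteq> y\<close> \<open>x \<noteq> z\<close> 4 in \<open>simp_all add: C5_facts\<close>)
  qed
qed

theorem claim15:
  fixes V :: "'a set" and E :: "'a \<Rightarrow> 'a \<Rightarrow> bool" and c :: "nat \<Rightarrow> 'a"
  assumes "in_class_C V E" and "connected_graph V E" and "induced_C5 V E c"
    and "i < 5" and "j < 5" and "i \<noteq> j"
    and "x \<in> Xset V E c i"
  shows "\<not> (\<exists>y z. y \<noteq> z \<and> y \<in> Xset V E c j \<and> z \<in> Xset V E c j \<and> E x y \<and> E x z)"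
proof
  assume "\<exists>y z. y \<noteq> z \<and> y \<in> Xset V E c j \<and> z \<in> Xset V E c j \<and> E x y \<and> E x z"
  then obtain y z where yz: "y \<noteq> z" "y \<in> Xset V E c j" "z \<in> Xset V E c j" "E x y" "E x z"
    by blast
  define j' where "j' = (j + (5 - i)) mod 5"
  have j': "0 < j'" "j' < 5" "(j' + i) mod 5 = j"
  proof -
    have "i \<in> {0, 1, 2, 3, 4}" "j \<in> {0, 1, 2, 3, 4}" using assms(4,5) by auto
    then show "0 < j'" "j' < 5" "(j' + i) mod 5 = j"
      using assms(6) unfolding j'_def by auto
  qed
  let ?c = "\<lambda>n. c ((n + i) mod 5)"
  have x: "x \<in> Xset V E ?c 0"
    using assms(4,7) by (simp add: Xset_rotate)
  have y: "y \<in> Xset V E ?c j'" and z: "z \<in> Xset V E ?c j'"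
    unfolding Xset_rotate j'(3) by (fact yz(2,3))+
  show False
    by (rule no_two_neighbours_in_Xj_of_X0_vertex[OF assms(1) induced_C5_rotate[OF assms(3)] j'(1,2)
          x y z yz(1,4,5)])
qed
end
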